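(* A graph $G$ on $n$ vertices is an outerplanar triangulation of pathwidth at most $2$ if and only if $G\in PW_2(n)$.
   Context: An outerplanar triangulation is a planar graph that can be drawn in the plane so that the outer face is incident with all vertices and every other face is incident with exactly three vertices. A path decomposition of $G$ is a sequence $(G_i)_{i=1}^m$ of subgraphs of $G$ such that every edge of $G$ lies in some $G_i$ and, for every vertex $v$, the indices $i$ with $v\in G_i$ form a contiguous interval; the pathwidth of $G$ is the least $k$ such that $G$ has a path decomposition with every $G_i$ having at most $k+1$ vertices. $PW_2(n)$ is the class of outerplanar triangulations $G$ on $n$ vertices whose vertex set can be partitioned into two disjoint sets $V_u\cup V_v=V(G)$ such that the induced subgraphs $G[V_u]$ and $G[V_v]$ are paths. *)

theory Defs
  imports Main
begin

definition simple_graph :: "'a set \<Rightarrow> 'a set set \<Rightarrow> bool" where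
  "simple_graph V E \<longleftrightarrow> finite V \<and> (\<forall>e\<in>E. e \<subseteq> V \<and> card e = 2)"

definition induced_path :: "'a set set \<Rightarrow> 'a set \<Rightarrow> bool" where
  "induced_path E S \<longleftrightarrow>
     (\<exists>xs. xs \<noteq> [] \<and> distinct xs \<and> set xs = S \<and>
        (\<forall>i<length xs. \<forall>j<length xs. {xs!i, xs!j} \<in> E \<longleftrightarrow> (i = Suc j \<or> j = Suc i)))"

text \<open>Path decomposition, given by the vertex sets (bags) of the subgraphs G_i:
  every edge lies in some bag, and for every vertex the indices of bags containing it
  form a contiguous interval.\<close>
definition path_decomposition :: "'a set \<Rightarrow> 'a set set \<Rightarrow> 'a set list \<Rightarrow> bool" where
  "path_decomposition V E Bs \<longleftrightarrow>
     (\<forall>B\<in>set Bs. B \<subseteq> V) \<and>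
     (\<forall>e\<in>E. \<exists>B\<in>set Bs. e \<subseteq> B) \<and>
     (\<forall>v i j k. i \<le> j \<and> j \<le> k \<and> k < length Bs \<and> v \<in> Bs!i \<and> v \<in> Bs!k \<longrightarrow> v \<in> Bs!j)"

definition pathwidth :: "'a set \<Rightarrow> 'a set set \<Rightarrow> nat" where
  "pathwidth V E = (LEAST k. \<exists>Bs. path_decomposition V E Bs \<and> (\<forall>B\<in>set Bs. card B \<le> k + 1))"

text \<open>Outerplanar triangulation (maximal outerplanar graph), described combinatorially:
  the vertices can be placed in cyclic order f 0, ..., f (n-1) around the outer face
  (a polygon), and the edges are the n polygon sides together with a set D of
  pairwise non-crossing diagonals triangulating the polygon (exactly n-3 of them).\<close>
definition outerplanar_triangulation :: "'a set \<Rightarrow> 'a set set \<Rightarrow> bool" where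
  "outerplanar_triangulation V E \<longleftrightarrow> simple_graph V E \<and> 3 \<le> card V \<and>
     (\<exists>f D. bij_betw f {..<card V} V \<and>
        D \<subseteq> {(i, j). i < j \<and> j < card V \<and> 2 \<le> j - i \<and> \<not> (i = 0 \<and> j = card V - 1)} \<and>
        (\<forall>(a, b)\<in>D. \<forall>(c, d)\<in>D. \<not> (a < c \<and> c < b \<and> b < d)) \<and>
        card D = card V - 3 \<and>
        E = {{f i, f (Suc i mod card V)} | i. i < card V} \<union> (\<lambda>(i, j). {f i, f j}) ` D)"

definition PW2 :: "nat \<Rightarrow> ('a set \<times> 'a set set) set" where
  "PW2 n = {(V, E). outerplanar_triangulation V E \<and> card V = n \<and>
     (\<exists>Vu Vv. Vu \<union> Vv = V \<and> Vu \<inter> Vv = {} \<and> induced_path E Vu \<and> induced_path E Vv)}"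

end

(*
  An outerplanar triangulation is a triangulated polygon, and both sides of the equivalence
  turn out to say that no triangle is bounded by three diagonals.  Such a triangle, together
  with the three triangles on its sides, is a sun, which has no path decomposition of width 2:
  two of the outer triangles have their bags on the same side of the bag of the inner one,
  and the nearer of these bags would need a fourth vertex.  Such a triangle also prevents a
  partition into two induced paths, because neither path can contain both ends of a diagonal:
  the other path is connected and avoids these ends, so it lies on one side of the diagonal,
  and then the first path contains a cycle through the diagonal.

  Conversely, if there is no such triangle, every sub-polygon cut off by a diagonal can be
  peeled off one ear at a time, so the triangulation is a strip of triangles.  The triangles
  in order form a path decomposition of width 2, and the diagonals all run between the two
  boundary arcs of the strip, which are therefore induced paths.
*)
theory Submission
  imports Defs
begin

section \<open>Path decompositions and induced paths\<close>

definition running_intersection :: "'a set list \<Rightarrow> bool" where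
  "running_intersection Bs \<longleftrightarrow>
     (\<forall>v i j k. i \<le> j \<and> j \<le> k \<and> k < length Bs \<and> v \<in> Bs!i \<and> v \<in> Bs!k \<longrightarrow> v \<in> Bs!j)"

lemma path_decomposition_iff:
  "path_decomposition V E Bs \<longleftrightarrow>
     (\<forall>B\<in>set Bs. B \<subseteq> V) \<and> (\<forall>e\<in>E. \<exists>B\<in>set Bs. e \<subseteq> B) \<and> running_intersection Bs"
  by (simp add: path_decomposition_def running_intersection_def)

lemma running_intersectionD:
  "running_intersection Bs \<Longrightarrow> i \<le> j \<Longrightarrow> j \<le> k \<Longrightarrow> k < length Bs \<Longrightarrow>
     v \<in> Bs!i \<Longrightarrow> v \<in> Bs!k \<Longrightarrow> v \<in> Bs!j"
  unfolding running_intersection_def by blast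

lemma running_intersection_between:
  assumes "running_intersection Bs" "i < length Bs" "k < length Bs"
    "i \<le> j \<and> j \<le> k \<or> k \<le> j \<and> j \<le> i" "v \<in> Bs!i" "v \<in> Bs!k"
  shows "v \<in> Bs!j"
  using assms(4)
proof
  assume "i \<le> j \<and> j \<le> k"
  then show ?thesis using running_intersectionD[OF assms(1)] assms by blast
next
  assume "k \<le> j \<and> j \<le> i"
  then show ?thesis using running_intersectionD[OF assms(1)] assms by blast
qed

lemma running_intersection_singleton: "running_intersection [B]"
  unfolding running_intersection_def by auto

lemma running_intersection_rev:
  assumes "running_intersection Bs"
  shows "running_intersection (rev Bs)"
  unfolding running_intersection_def
proof (intro allI impI)
  fix v i j k
  assume a: "i \<le> j \<and> j \<le> k \<and> k < length (rev Bs) \<and> v \<in> rev Bs ! i \<and> v \<in> rev Bs ! k"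
  let ?r = "\<lambda>i. length Bs - 1 - i"
  have "v \<in> Bs ! ?r j"
    using running_intersectionD[OF assms, of "?r k" "?r j" "?r i"] a by (auto simp: rev_nth)
  then show "v \<in> rev Bs ! j" using a by (auto simp: rev_nth)
qed

lemma running_intersection_append:
  assumes "running_intersection Bs" "running_intersection Cs" "Bs \<noteq> []" "Cs \<noteq> []"
    and shared: "\<And>v B C. B \<in> set Bs \<Longrightarrow> C \<in> set Cs \<Longrightarrow> v \<in> B \<Longrightarrow> v \<in> C \<Longrightarrow> v \<in> last Bs \<and> v \<in> hd Cs"
  shows "running_intersection (Bs @ Cs)"
  unfolding running_intersection_def
proof (intro allI impI)
  fix v i j k
  assume a: "i \<le> j \<and> j \<le> k \<and> k < length (Bs @ Cs) \<and> v \<in> (Bs @ Cs) ! i \<and> v \<in> (Bs @ Cs) ! k"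
  let ?a = "length Bs"
  consider "k < ?a" | "?a \<le> i" | "i < ?a" "?a \<le> k" by linarith
  then show "v \<in> (Bs @ Cs) ! j"
  proof cases
    case 1
    then show ?thesis
      using running_intersectionD[OF assms(1), of i j k v] a by (auto simp: nth_append)
  next
    case 2
    then show ?thesis
      using running_intersectionD[OF assms(2), of "i - ?a" "j - ?a" "k - ?a" v] a
      by (auto simp: nth_append)
  next
    case 3
    have "v \<in> Bs ! i" "v \<in> Cs ! (k - ?a)" "k - ?a < length Cs" using a 3 by (auto simp: nth_append)
    then have "v \<in> Bs ! (?a - 1)" "v \<in> Cs ! 0"
      using shared[of "Bs ! i" "Cs ! (k - ?a)" v] 3 assms(3,4)
      by (auto simp: last_conv_nth hd_conv_nth)
    then show ?thesis
      using running_intersectionD[OF assms(1), of i j "?a - 1" v]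
        running_intersectionD[OF assms(2), of 0 "j - ?a" "k - ?a" v]
        a 3 \<open>v \<in> Bs ! i\<close> \<open>v \<in> Cs ! (k - ?a)\<close>
      by (cases "j < ?a") (auto simp: nth_append)
  qed
qed

lemma running_intersection_Cons:
  assumes "running_intersection Bs" "Bs \<noteq> []" "\<And>v B. B \<in> set Bs \<Longrightarrow> v \<in> X \<Longrightarrow> v \<in> B \<Longrightarrow> v \<in> hd Bs"
  shows "running_intersection (X # Bs)"
  using running_intersection_append[OF running_intersection_singleton assms(1) _ assms(2), of X]
    assms(3)
  by auto

lemma path_decomposition_image:
  assumes "inj_on f V" "path_decomposition V E Bs"
  shows "path_decomposition (f ` V) ((`) f ` E) (map ((`) f) Bs)"
  unfolding path_decomposition_iff
proof (intro conjI)
  have bags: "\<forall>B\<in>set Bs. B \<subseteq> V" and edges: "\<forall>e\<in>E. \<exists>B\<in>set Bs. e \<subseteq> B"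
    and ri: "running_intersection Bs"
    using assms(2) by (simp_all add: path_decomposition_iff)
  show "\<forall>B\<in>set (map ((`) f) Bs). B \<subseteq> f ` V" using bags by auto
  show "\<forall>e\<in>(`) f ` E. \<exists>B\<in>set (map ((`) f) Bs). e \<subseteq> B"
  proof
    fix e' assume "e' \<in> (`) f ` E"
    then obtain e B where "e' = f ` e" "B \<in> set Bs" "e \<subseteq> B" using edges by blast
    then have "f ` B \<in> set (map ((`) f) Bs)" "e' \<subseteq> f ` B" by auto
    then show "\<exists>B\<in>set (map ((`) f) Bs). e' \<subseteq> B" by blast
  qed
  show "running_intersection (map ((`) f) Bs)"
    unfolding running_intersection_def
  proof (intro allI impI)
    fix v i j k
    assume a: "i \<le> j \<and> j \<le> k \<and> k < length (map ((`) f) Bs) \<and>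
      v \<in> map ((`) f) Bs ! i \<and> v \<in> map ((`) f) Bs ! k"
    then have ik: "i < length Bs" "j < length Bs" "k < length Bs" by auto
    then obtain x y where xy: "x \<in> Bs!i" "y \<in> Bs!k" "v = f x" "v = f y" using a by auto
    moreover have "x \<in> V" "y \<in> V" using bags ik xy nth_mem by blast+
    ultimately have "x \<in> Bs!k" using inj_onD[OF assms(1)] by metis
    then have "x \<in> Bs!j" using running_intersectionD[OF ri, of i j k x] a ik xy by blast
    then show "v \<in> map ((`) f) Bs ! j" using ik xy by simp
  qed
qed

lemma pathwidth_le_iff:
  assumes "\<forall>e\<in>E. e \<subseteq> V"
  shows "pathwidth V E \<le> k \<longleftrightarrow> (\<exists>Bs. path_decomposition V E Bs \<and> (\<forall>B\<in>set Bs. card B \<le> k + 1))"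
    (is "_ \<longleftrightarrow> ?dec k")
proof
  assume le: "pathwidth V E \<le> k"
  have "path_decomposition V E [V]" using assms by (auto simp: path_decomposition_def)
  then have "?dec (card V)" by auto
  then have "?dec (pathwidth V E)" unfolding pathwidth_def by (rule LeastI)
  then obtain Bs where "path_decomposition V E Bs" "\<forall>B\<in>set Bs. card B \<le> pathwidth V E + 1"
    by blast
  with le show "?dec k" by (meson add_le_mono1 order_trans)
next
  show "?dec k \<Longrightarrow> pathwidth V E \<le> k" unfolding pathwidth_def by (rule Least_le)
qed

lemma pathwidth_image_le:
  assumes "inj_on f V" "\<forall>e\<in>E. e \<subseteq> V"
  shows "pathwidth (f ` V) ((`) f ` E) \<le> pathwidth V E"
proof -
  obtain Bs where Bs: "path_decomposition V E Bs" "\<forall>B\<in>set Bs. card B \<le> pathwidth V E + 1"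
    using pathwidth_le_iff[OF assms(2)] by blast
  have "card (f ` B) \<le> pathwidth V E + 1" if "B \<in> set Bs" for B
  proof -
    have "B \<subseteq> V" using Bs(1) that by (simp add: path_decomposition_def)
    then have "card (f ` B) = card B" using assms(1) by (meson card_image inj_on_subset)
    then show ?thesis using Bs(2) that by simp
  qed
  then have "\<forall>B\<in>set (map ((`) f) Bs). card B \<le> pathwidth V E + 1" by simp
  moreover have "\<forall>e\<in>(`) f ` E. e \<subseteq> f ` V" using assms(2) by blast
  ultimately show ?thesis
    using pathwidth_le_iff path_decomposition_image[OF assms(1) Bs(1)] by blast
qed

lemma bij_betw_inv_into_edges:
  assumes "bij_betw f A V" "\<forall>e\<in>F. e \<subseteq> A"
  shows "inj_on (inv_into A f) V" "inv_into A f ` V = A" "\<forall>e\<in>(`) f ` F. e \<subseteq> V"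
    "(`) (inv_into A f) ` (`) f ` F = F"
proof -
  have inj: "inj_on f A" and V: "f ` A = V" using assms(1) by (auto simp: bij_betw_def)
  show "inj_on (inv_into A f) V" using V by (simp add: inj_on_inv_into)
  show "inv_into A f ` V = A"
    unfolding V[symmetric] by (rule inv_into_image_cancel[OF inj order_refl])
  show "\<forall>e\<in>(`) f ` F. e \<subseteq> V" using assms(2) V by blast
  have "inv_into A f ` f ` e = e" if "e \<in> F" for e
    using inj assms(2) that by (simp add: inv_into_image_cancel)
  then show "(`) (inv_into A f) ` (`) f ` F = F" by (simp add: image_image)
qed

lemma pathwidth_bij_image:
  assumes "bij_betw f A V" "\<forall>e\<in>F. e \<subseteq> A"
  shows "pathwidth V ((`) f ` F) = pathwidth A F"
proof (rule antisym)
  have inj: "inj_on f A" and V: "f ` A = V" using assms(1) by (auto simp: bij_betw_def)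
  show "pathwidth V ((`) f ` F) \<le> pathwidth A F"
    using pathwidth_image_le[OF inj assms(2)] V by simp
  have "pathwidth (inv_into A f ` V) ((`) (inv_into A f) ` (`) f ` F) \<le> pathwidth V ((`) f ` F)"
    by (rule pathwidth_image_le[OF bij_betw_inv_into_edges(1,3)[OF assms]])
  then show "pathwidth A F \<le> pathwidth V ((`) f ` F)"
    unfolding bij_betw_inv_into_edges(2,4)[OF assms] .
qed

definition two_induced_paths :: "'a set \<Rightarrow> 'a set set \<Rightarrow> bool" where
  "two_induced_paths V E \<longleftrightarrow>
     (\<exists>Vu Vv. Vu \<union> Vv = V \<and> Vu \<inter> Vv = {} \<and> induced_path E Vu \<and> induced_path E Vv)"

lemma induced_path_image:
  assumes "inj_on f V" "\<forall>e\<in>E. e \<subseteq> V" "S \<subseteq> V" "induced_path E S"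
  shows "induced_path ((`) f ` E) (f ` S)"
proof -
  obtain xs where xs: "xs \<noteq> []" "distinct xs" "set xs = S"
    "\<forall>i<length xs. \<forall>j<length xs. {xs!i, xs!j} \<in> E \<longleftrightarrow> (i = Suc j \<or> j = Suc i)"
    using assms(4) unfolding induced_path_def by blast
  have inj_S: "inj_on f S" using assms(1,3) by (rule inj_on_subset)
  have edge_iff: "{f a, f b} \<in> (`) f ` E \<longleftrightarrow> {a, b} \<in> E" if "a \<in> S" "b \<in> S" for a b
  proof
    assume "{f a, f b} \<in> (`) f ` E"
    then obtain e where e: "e \<in> E" "f ` e = f ` {a, b}" by auto
    moreover have "e \<subseteq> V" "{a, b} \<subseteq> V" using assms(2,3) e(1) that by auto
    then have "f ` e = f ` {a, b} \<longleftrightarrow> e = {a, b}" by (rule inj_on_image_eq_iff[OF assms(1)])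
    ultimately have "e = {a, b}" by blast
    then show "{a, b} \<in> E" using e(1) by simp
  next
    assume "{a, b} \<in> E"
    then have "f ` {a, b} \<in> (`) f ` E" by (rule imageI)
    then show "{f a, f b} \<in> (`) f ` E" by simp
  qed
  show ?thesis
    unfolding induced_path_def
  proof (intro exI conjI)
    show "map f xs \<noteq> []" "set (map f xs) = f ` S" using xs by auto
    show "distinct (map f xs)" using xs inj_S by (simp add: distinct_map)
    show "\<forall>i<length (map f xs). \<forall>j<length (map f xs).
        {map f xs ! i, map f xs ! j} \<in> (`) f ` E \<longleftrightarrow> (i = Suc j \<or> j = Suc i)"
      using xs(3,4) edge_iff by (metis length_map nth_map nth_mem)
  qed
qed

lemma two_induced_paths_image:
  assumes "inj_on f V" "\<forall>e\<in>E. e \<subseteq> V" "two_induced_paths V E"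
  shows "two_induced_paths (f ` V) ((`) f ` E)"
proof -
  obtain P Q where PQ: "P \<union> Q = V" "P \<inter> Q = {}" "induced_path E P" "induced_path E Q"
    using assms(3) unfolding two_induced_paths_def by blast
  have "f ` P \<union> f ` Q = f ` V" using PQ(1) by blast
  moreover have "f ` P \<inter> f ` Q = {}"
    using PQ(1,2) assms(1) by (metis image_empty inj_on_image_Int sup_ge1 sup_ge2)
  moreover have "induced_path ((`) f ` E) (f ` P)" "induced_path ((`) f ` E) (f ` Q)"
    using PQ induced_path_image[OF assms(1,2)] by blast+
  ultimately show ?thesis unfolding two_induced_paths_def by blast
qed

lemma two_induced_paths_bij_image:
  assumes "bij_betw f A V" "\<forall>e\<in>F. e \<subseteq> A"
  shows "two_induced_paths V ((`) f ` F) \<longleftrightarrow> two_induced_paths A F"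
proof
  have inj: "inj_on f A" and V: "f ` A = V" using assms(1) by (auto simp: bij_betw_def)
  show "two_induced_paths A F \<Longrightarrow> two_induced_paths V ((`) f ` F)"
    using two_induced_paths_image[OF inj assms(2)] V by simp
  assume "two_induced_paths V ((`) f ` F)"
  then have "two_induced_paths (inv_into A f ` V) ((`) (inv_into A f) ` (`) f ` F)"
    by (rule two_induced_paths_image[OF bij_betw_inv_into_edges(1,3)[OF assms]])
  then show "two_induced_paths A F"
    unfolding bij_betw_inv_into_edges(2,4)[OF assms] .
qed

lemma path_decomposition_edge:
  assumes "path_decomposition V E Bs" "e \<in> E"
  obtains i where "i < length Bs" "e \<subseteq> Bs!i"
proof -
  obtain B where "B \<in> set Bs" "e \<subseteq> B" using assms by (auto simp: path_decomposition_iff)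
  then show ?thesis using that by (metis in_set_conv_nth)
qed

lemma path_decomposition_triangle:
  assumes pd: "path_decomposition V E Bs" and e: "{a, b} \<in> E" "{b, c} \<in> E" "{a, c} \<in> E"
  obtains i where "i < length Bs" "{a, b, c} \<subseteq> Bs!i"
proof -
  have ri: "running_intersection Bs" using pd by (simp add: path_decomposition_iff)
  obtain i1 where i1: "i1 < length Bs" "{a, b} \<subseteq> Bs!i1" using path_decomposition_edge[OF pd e(1)] .
  obtain i2 where i2: "i2 < length Bs" "{b, c} \<subseteq> Bs!i2" using path_decomposition_edge[OF pd e(2)] .
  obtain i3 where i3: "i3 < length Bs" "{a, c} \<subseteq> Bs!i3" using path_decomposition_edge[OF pd e(3)] .
  \<comment> \<open>Helly property of intervals: the middle bag contains all three vertices.\<close>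
  consider "i1 \<le> i2 \<and> i2 \<le> i3 \<or> i3 \<le> i2 \<and> i2 \<le> i1"
    | "i2 \<le> i1 \<and> i1 \<le> i3 \<or> i3 \<le> i1 \<and> i1 \<le> i2"
    | "i1 \<le> i3 \<and> i3 \<le> i2 \<or> i2 \<le> i3 \<and> i3 \<le> i1"
    by linarith
  then show ?thesis
  proof cases
    case 1
    then have "a \<in> Bs!i2" using running_intersection_between[OF ri i1(1) i3(1)] i1 i3 by auto
    then show ?thesis using that i2 by auto
  next
    case 2
    then have "c \<in> Bs!i1" using running_intersection_between[OF ri i2(1) i3(1)] i2 i3 by auto
    then show ?thesis using that i1 by auto
  next
    case 3
    then have "b \<in> Bs!i3" using running_intersection_between[OF ri i1(1) i2(1)] i1 i2 by auto
    then show ?thesis using that i3 by auto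
  qed
qed

lemma path_decomposition_triangle_bag:
  assumes pd: "path_decomposition V E Bs" and width: "\<forall>B\<in>set Bs. card B \<le> 3" and "finite V"
    and e: "{a, b} \<in> E" "{b, c} \<in> E" "{a, c} \<in> E" and "distinct [a, b, c]"
  obtains i where "i < length Bs" "Bs!i = {a, b, c}"
proof -
  obtain i where i: "i < length Bs" "{a, b, c} \<subseteq> Bs!i"
    using path_decomposition_triangle[OF pd e] .
  have "Bs!i \<subseteq> V" using pd i(1) by (auto simp: path_decomposition_def)
  then have "finite (Bs!i)" using \<open>finite V\<close> by (rule finite_subset)
  moreover have "card (Bs!i) \<le> card {a, b, c}"
    using width i(1) \<open>distinct [a, b, c]\<close> nth_mem by fastforce
  ultimately have "{a, b, c} = Bs!i" using i(2) card_seteq by blast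
  then show ?thesis using that i(1) by simp
qed

text \<open>Two of the outer
  triangles have their bags on the same side of the bag of x y z, and the nearer of these bags
  also has to contain the edge that the farther triangle shares with x y z.\<close>
lemma sun_excludes_width_3_decomposition:
  assumes pd: "path_decomposition V E Bs" and width: "\<forall>B\<in>set Bs. card B \<le> 3" and "finite V"
    and d: "distinct [x, y, z, u, v, w]"
    and e: "{x, y} \<in> E" "{y, z} \<in> E" "{x, z} \<in> E" "{x, u} \<in> E" "{y, u} \<in> E"
      "{y, v} \<in> E" "{z, v} \<in> E" "{x, w} \<in> E" "{z, w} \<in> E"
  shows False
proof -
  have ri: "running_intersection Bs" using pd by (simp add: path_decomposition_iff)
  note bag = path_decomposition_triangle_bag[OF pd width \<open>finite V\<close>]
  obtain i0 where i0: "i0 < length Bs" "Bs!i0 = {x, y, z}" using bag[OF e(1,2,3)] d by auto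
  obtain i1 where i1: "i1 < length Bs" "Bs!i1 = {x, y, u}" using bag[OF e(1,5,4)] d by auto
  obtain i2 where i2: "i2 < length Bs" "Bs!i2 = {y, z, v}" using bag[OF e(2,7,6)] d by auto
  obtain i3 where i3: "i3 < length Bs" "Bs!i3 = {x, z, w}" using bag[OF e(3,9,8)] d by auto
  have b1: "{x, y} \<subseteq> Bs!j" if "i1 \<le> j \<and> j \<le> i0 \<or> i0 \<le> j \<and> j \<le> i1" for j
    using running_intersection_between[OF ri i1(1) i0(1) that] i0 i1 by auto
  have b2: "{y, z} \<subseteq> Bs!j" if "i2 \<le> j \<and> j \<le> i0 \<or> i0 \<le> j \<and> j \<le> i2" for j
    using running_intersection_between[OF ri i2(1) i0(1) that] i0 i2 by auto
  have b3: "{x, z} \<subseteq> Bs!j" if "i3 \<le> j \<and> j \<le> i0 \<or> i0 \<le> j \<and> j \<le> i3" for j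
    using running_intersection_between[OF ri i3(1) i0(1) that] i0 i3 by auto
  have "\<not> (i1 \<le> i2 \<and> i2 \<le> i0 \<or> i0 \<le> i2 \<and> i2 \<le> i1)" using b1[of i2] i2 d by auto
  moreover have "\<not> (i2 \<le> i1 \<and> i1 \<le> i0 \<or> i0 \<le> i1 \<and> i1 \<le> i2)" using b2[of i1] i1 d by auto
  moreover have "\<not> (i1 \<le> i3 \<and> i3 \<le> i0 \<or> i0 \<le> i3 \<and> i3 \<le> i1)" using b1[of i3] i3 d by auto
  moreover have "\<not> (i3 \<le> i1 \<and> i1 \<le> i0 \<or> i0 \<le> i1 \<and> i1 \<le> i3)" using b3[of i1] i1 d by auto
  moreover have "\<not> (i2 \<le> i3 \<and> i3 \<le> i0 \<or> i0 \<le> i3 \<and> i3 \<le> i2)" using b2[of i3] i3 d by auto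
  moreover have "\<not> (i3 \<le> i2 \<and> i2 \<le> i0 \<or> i0 \<le> i2 \<and> i2 \<le> i3)" using b3[of i2] i2 d by auto
  ultimately show False by linarith
qed

lemma induced_path_constant:
  assumes "induced_path E S" and step: "\<And>a b. a \<in> S \<Longrightarrow> b \<in> S \<Longrightarrow> {a, b} \<in> E \<Longrightarrow> P a = P b"
    and "a \<in> S" "b \<in> S"
  shows "P a = P b"
proof -
  obtain xs where xs: "xs \<noteq> []" "set xs = S"
    "\<forall>i<length xs. \<forall>j<length xs. {xs!i, xs!j} \<in> E \<longleftrightarrow> (i = Suc j \<or> j = Suc i)"
    using assms(1) unfolding induced_path_def by blast
  have const: "P (xs!t) = P (xs!0)" if "t < length xs" for t
    using that
  proof (induction t)
    case (Suc t)
    then have "{xs!t, xs!Suc t} \<in> E" using xs(3) by simp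
    then show ?case using step Suc xs(2) by (metis Suc_lessD nth_mem)
  qed simp
  show ?thesis using const assms(3,4) xs(2) by (metis in_set_conv_nth)
qed

text \<open>A walk with steps of length one that never revisits a value keeps its direction, since
  reversing a step would return to the value two steps back.\<close>
lemma unit_steps_inj_linear:
  fixes p :: "nat \<Rightarrow> int"
  assumes steps: "\<And>t. t < M \<Longrightarrow> \<bar>p (Suc t) - p t\<bar> = 1" and inj: "inj_on p {..M}" and "t \<le> M"
  shows "p t = p 0 + int t * (p 1 - p 0)"
  using \<open>t \<le> M\<close>
proof (induction t rule: less_induct)
  case (less t)
  define d where "d = p 1 - p 0"
  consider "t \<le> 1" | r where "t = Suc (Suc r)"
  proof (cases "t \<le> 1")
    case False
    then have "t = Suc (Suc (t - 2))" by simp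
    then show ?thesis using that by blast
  qed
  then show ?case
  proof cases
    case 1
    then show ?thesis by (cases t) auto
  next
    case 2
    have IH: "p r = p 0 + int r * d" "p (Suc r) = p 0 + int (Suc r) * d"
      using less.IH[of r] less.IH[of "Suc r"] less.prems 2 unfolding d_def by simp_all
    then have "p (Suc r) = p r + d" by (simp add: algebra_simps)
    moreover have "\<bar>d\<bar> = 1" "\<bar>p t - p (Suc r)\<bar> = 1"
      using steps less.prems 2 unfolding d_def by simp_all
    moreover have "p t \<noteq> p r" using inj_onD[OF inj, of t r] less.prems 2 by auto
    ultimately have "p t = p r + 2 * d" by linarith
    then show ?thesis using IH(1) 2 unfolding d_def by (simp add: algebra_simps)
  qed
qed

lemma induced_path_no_cycle:
  assumes "induced_path E S" "2 \<le> M" "inj_on c {..M}" "\<And>t. t \<le> M \<Longrightarrow> c t \<in> S"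
    "\<And>t. t < M \<Longrightarrow> {c t, c (Suc t)} \<in> E" "{c 0, c M} \<in> E"
  shows False
proof -
  obtain xs where xs: "set xs = S"
    "\<forall>i<length xs. \<forall>j<length xs. {xs!i, xs!j} \<in> E \<longleftrightarrow> (i = Suc j \<or> j = Suc i)"
    using assms(1) unfolding induced_path_def by blast
  have "\<forall>t\<in>{..M}. \<exists>i. i < length xs \<and> xs!i = c t"
    using assms(4) xs(1) by (auto simp: in_set_conv_nth)
  from bchoice[OF this] obtain pos where pos: "\<And>t. t \<le> M \<Longrightarrow> pos t < length xs \<and> xs!pos t = c t"
    by auto
  have adj: "\<bar>int (pos a) - int (pos b)\<bar> = 1" if "a \<le> M" "b \<le> M" "{c a, c b} \<in> E" for a b
  proof -
    have "{xs ! pos a, xs ! pos b} \<in> E" using pos that by simp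
    then have "pos a = Suc (pos b) \<or> pos b = Suc (pos a)"
      using xs(2) pos[OF that(1)] pos[OF that(2)] by blast
    then show ?thesis by auto
  qed
  have steps: "\<bar>int (pos (Suc t)) - int (pos t)\<bar> = 1" if "t < M" for t
    using adj[of "Suc t" t] assms(5)[OF that] that by (simp add: insert_commute)
  have "inj_on (\<lambda>t. int (pos t)) {..M}"
  proof (rule inj_onI)
    fix a b assume "a \<in> {..M}" "b \<in> {..M}" "int (pos a) = int (pos b)"
    then have "c a = c b" using pos by (metis atMost_iff of_nat_eq_iff)
    then show "a = b" using inj_onD[OF assms(3)] \<open>a \<in> {..M}\<close> \<open>b \<in> {..M}\<close> by blast
  qed
  then have "int (pos M) = int (pos 0) + int M * (int (pos 1) - int (pos 0))"
    using unit_steps_inj_linear[of M "\<lambda>t. int (pos t)" M] steps by simp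
  moreover have "\<bar>int (pos 1) - int (pos 0)\<bar> = 1" using steps[of 0] assms(2) by simp
  then have "\<bar>int M * (int (pos 1) - int (pos 0))\<bar> = int M" by (simp add: abs_mult)
  moreover have "\<bar>int (pos 0) - int (pos M)\<bar> = 1" using adj[of 0 M] assms(6) by simp
  ultimately show False using assms(2) by linarith
qed

section \<open>Non-crossing chords\<close>

definition noncrossing :: "(nat \<times> nat) set \<Rightarrow> bool" where
  "noncrossing S \<longleftrightarrow> (\<forall>(a, b)\<in>S. \<forall>(c, d)\<in>S. \<not> (a < c \<and> c < b \<and> b < d))"

definition chords :: "nat \<Rightarrow> nat \<Rightarrow> (nat \<times> nat) set" where
  "chords l r = {(i, j). l \<le> i \<and> i < j \<and> j \<le> r \<and> 2 \<le> j - i}"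

lemma noncrossingD:
  "noncrossing S \<Longrightarrow> (a, b) \<in> S \<Longrightarrow> (c, d) \<in> S \<Longrightarrow> a < c \<Longrightarrow> c < b \<Longrightarrow> b < d \<Longrightarrow> False"
  unfolding noncrossing_def by fast

lemma noncrossing_subset: "noncrossing S \<Longrightarrow> T \<subseteq> S \<Longrightarrow> noncrossing T"
  unfolding noncrossing_def by blast

lemma finite_chords: "finite (chords l r)"
  by (rule finite_subset[of _ "{..r} \<times> {..r}"]) (auto simp: chords_def)

lemma noncrossing_split_at_longest:
  assumes "noncrossing S" "S \<subseteq> chords l r" "(l, k) \<in> S" "\<And>j. (l, j) \<in> S \<Longrightarrow> j \<le> k"
  shows "S \<subseteq> chords l k \<union> chords k r"
proof
  fix p assume "p \<in> S"
  then obtain i j where p: "p = (i, j)" "(i, j) \<in> S" by (cases p) auto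
  then have "\<not> (i < k \<and> k < j)"
    using assms noncrossingD[OF assms(1) assms(3) p(2)] by (cases "i = l") (force simp: chords_def)+
  then show "p \<in> chords l k \<union> chords k r" using p assms(2) by (auto simp: chords_def)
qed

lemma card_noncrossing_chords:
  assumes "noncrossing S" "S \<subseteq> chords l r" "l < r"
  shows "card S + 1 \<le> r - l"
  using assms
proof (induction "r - l" arbitrary: l r S rule: less_induct)
  case less
  define S' where "S' = S - {(l, r)}"
  have fin: "finite S" using less.prems(2) finite_chords by (rule finite_subset)
  have card_S: "card S \<le> card S' + 1"
    unfolding S'_def using fin by (cases "(l, r) \<in> S") (auto simp: card_Diff_singleton_if)
  have nc: "noncrossing S'" and sub: "S' \<subseteq> chords l r"
    using less.prems noncrossing_subset unfolding S'_def by auto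
  show ?case
  proof (cases "\<exists>j. (l, j) \<in> S'")
    case True
    define k where "k = Max {j. (l, j) \<in> S'}"
    have fin_l: "finite {j. (l, j) \<in> S'}"
      by (rule finite_subset[of _ "{..r}"]) (use sub in \<open>auto simp: chords_def\<close>)
    have lk: "(l, k) \<in> S'" using True Max_in[OF fin_l] unfolding k_def by auto
    have k_max: "\<And>j. (l, j) \<in> S' \<Longrightarrow> j \<le> k" using fin_l unfolding k_def by auto
    have k: "l + 2 \<le> k" "k < r" using lk sub unfolding S'_def chords_def by auto
    have split: "S' \<subseteq> (S' \<inter> chords l k) \<union> (S' \<inter> chords k r)"
      using noncrossing_split_at_longest[OF nc sub lk k_max] by blast
    have "card (S' \<inter> chords l k) + 1 \<le> k - l"
      using less.hyps[of k l] k noncrossing_subset[OF nc] by auto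
    moreover have "card (S' \<inter> chords k r) + 1 \<le> r - k"
      using less.hyps[of r k] k noncrossing_subset[OF nc] by auto
    moreover have "card S' \<le> card (S' \<inter> chords l k) + card (S' \<inter> chords k r)"
      using card_mono[OF _ split] card_Un_le finite_chords by (meson finite_Int finite_UnI le_trans)
    ultimately show ?thesis using card_S k by linarith
  next
    case False
    have sub': "S' \<subseteq> chords (Suc l) r"
    proof
      fix p assume "p \<in> S'"
      moreover obtain i j where "p = (i, j)" by fastforce
      ultimately show "p \<in> chords (Suc l) r"
        using False sub by (cases "i = l") (auto simp: chords_def)
    qed
    show ?thesis
    proof (cases "Suc l < r")
      case True
      then have "card S' + 1 \<le> r - Suc l" using less.hyps[of r "Suc l" S'] nc sub' by auto
      then show ?thesis using card_S by linarith
    next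
      case False
      then have "S = {}" using less.prems(2,3) by (force simp: chords_def)
      then show ?thesis using less.prems(3) by simp
    qed
  qed
qed

lemma noncrossing_insertI:
  assumes "noncrossing S" "\<And>a b. (a, b) \<in> S \<Longrightarrow> \<not> (a < k \<and> k < b \<and> b < j)"
    "\<And>c d. (c, d) \<in> S \<Longrightarrow> \<not> (k < c \<and> c < j \<and> j < d)"
  shows "noncrossing (insert (k, j) S)"
  unfolding noncrossing_def
proof clarify
  fix a b c d
  assume "(a, b) \<in> insert (k, j) S" "(c, d) \<in> insert (k, j) S" "a < c" "c < b" "b < d"
  then show False using assms noncrossingD[OF assms(1)] by auto
qed

section \<open>Triangulated polygons\<close>

lemma mod_add_left_inj:
  fixes n :: nat
  assumes "(s + a) mod n = (s + b) mod n" "a < n" "b < n"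
  shows "a = b"
proof (cases "a \<le> b")
  case True
  obtain q where "s + b = s + a + n * q" using mod_eq_nat1E[OF assms(1)[symmetric]] True by auto
  then show ?thesis using assms(3) by (cases q) auto
next
  case False
  obtain q where "s + a = s + b + n * q" using mod_eq_nat1E[OF assms(1)] False by auto
  then show ?thesis using assms(2) by (cases q) auto
qed

locale triangulated_polygon =
  fixes n :: nat and D :: "(nat \<times> nat) set"
  assumes n_ge_3: "3 \<le> n"
    and D_sub: "D \<subseteq> {(i, j). i < j \<and> j < n \<and> 2 \<le> j - i \<and> \<not> (i = 0 \<and> j = n - 1)}"
    and noncrossing_D: "noncrossing D"
    and card_D: "card D = n - 3"
begin

definition polygon_edges :: "nat set set" where
  "polygon_edges = {{i, Suc i mod n} | i. i < n} \<union> (\<lambda>(i, j). {i, j}) ` D"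

definition adj :: "nat \<Rightarrow> nat \<Rightarrow> bool" where
  "adj i j \<longleftrightarrow> j = Suc i mod n \<or> i = Suc j mod n \<or> (i, j) \<in> D \<or> (j, i) \<in> D"

text \<open>The diagonals together with the side (0, n - 1), which plays the role of a diagonal
  cutting off the whole polygon.\<close>
definition D_base :: "(nat \<times> nat) set" where
  "D_base = insert (0, n - 1) D"

lemma D_mem: "(i, j) \<in> D \<Longrightarrow> i < j \<and> j < n \<and> 2 \<le> j - i \<and> \<not> (i = 0 \<and> j = n - 1)"
  using D_sub by auto

lemma D_cross: "(a, b) \<in> D \<Longrightarrow> (c, d) \<in> D \<Longrightarrow> a < c \<Longrightarrow> c < b \<Longrightarrow> b < d \<Longrightarrow> False"
  using noncrossingD[OF noncrossing_D] .

lemma finite_D: "finite D"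
  by (rule finite_subset[of _ "{..<n} \<times> {..<n}"]) (auto dest: D_mem)

lemma D_base_mem: "(i, j) \<in> D_base \<Longrightarrow> i < j \<and> j < n \<and> 2 \<le> j - i"
  using D_sub n_ge_3 unfolding D_base_def by auto

lemma D_base_sub_chords: "D_base \<subseteq> chords 0 (n - 1)"
  using D_base_mem by (force simp: chords_def)

lemma noncrossing_D_base: "noncrossing D_base"
  unfolding D_base_def by (rule noncrossing_insertI[OF noncrossing_D]) (auto dest: D_mem)

lemma card_D_base: "card D_base = n - 2"
proof -
  have "(0, n - 1) \<notin> D" using D_mem by blast
  then show ?thesis unfolding D_base_def using finite_D card_D n_ge_3 by simp
qed

lemma adj_sym: "adj i j \<longleftrightarrow> adj j i"
  unfolding adj_def by auto

lemma adj_iff: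
  assumes "i < j" "j < n"
  shows "adj i j \<longleftrightarrow> j = Suc i \<or> (i, j) \<in> D_base"
proof
  assume "adj i j"
  then consider "j = Suc i mod n" | "i = Suc j mod n" | "(i, j) \<in> D" | "(j, i) \<in> D"
    unfolding adj_def by blast
  then show "j = Suc i \<or> (i, j) \<in> D_base"
  proof cases
    case 1
    then show ?thesis using assms by (cases "Suc i < n") auto
  next
    case 2
    then have "Suc j = n" using assms by (cases "Suc j < n") auto
    then show ?thesis using 2 assms unfolding D_base_def by auto
  next
    case 3
    then show ?thesis unfolding D_base_def by simp
  next
    case 4
    then show ?thesis using D_mem[OF 4] assms by simp
  qed
next
  assume "j = Suc i \<or> (i, j) \<in> D_base"
  then show "adj i j" unfolding adj_def D_base_def using assms n_ge_3 by auto
qed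

lemma adj_iff_D:
  assumes "i < j" "j < n" "\<not> (i = 0 \<and> j = n - 1)"
  shows "adj i j \<longleftrightarrow> j = Suc i \<or> (i, j) \<in> D"
  using adj_iff[OF assms(1,2)] assms(3) unfolding D_base_def by auto

lemma adj_Suc: "Suc i < n \<Longrightarrow> adj i (Suc i)"
  unfolding adj_def by auto

lemma adj_0_last: "adj 0 (n - 1)"
  unfolding adj_def using n_ge_3 by auto

lemma adj_D: "(i, j) \<in> D \<Longrightarrow> adj i j"
  unfolding adj_def by auto

lemma adj_irrefl:
  assumes "i < n"
  shows "\<not> adj i i"
proof
  assume "adj i i"
  then have "i = Suc i mod n" unfolding adj_def using D_mem by blast
  moreover have "Suc i mod n \<noteq> i" using assms n_ge_3 by (cases "Suc i = n") auto
  ultimately show False by simp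
qed

lemma edge_iff_adj:
  assumes "i < n" "j < n"
  shows "{i, j} \<in> polygon_edges \<longleftrightarrow> adj i j"
proof
  assume "{i, j} \<in> polygon_edges"
  then consider a where "{i, j} = {a, Suc a mod n}" | a b where "(a, b) \<in> D" "{i, j} = {a, b}"
    unfolding polygon_edges_def by auto
  then show "adj i j"
  proof cases
    case 1
    then have "i = a \<and> j = Suc a mod n \<or> i = Suc a mod n \<and> j = a" by (simp add: doubleton_eq_iff)
    then show ?thesis unfolding adj_def by blast
  next
    case 2
    then have "i = a \<and> j = b \<or> i = b \<and> j = a" by (simp add: doubleton_eq_iff)
    then show ?thesis unfolding adj_def using 2(1) by blast
  qed
next
  assume "adj i j"
  then consider "j = Suc i mod n" | "i = Suc j mod n" | "(i, j) \<in> D" | "(j, i) \<in> D"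
    unfolding adj_def by blast
  then show "{i, j} \<in> polygon_edges"
  proof cases
    case 1
    then show ?thesis unfolding polygon_edges_def using assms(1) by blast
  next
    case 2
    then have "{i, j} = {j, Suc j mod n}" by auto
    then show ?thesis unfolding polygon_edges_def using assms(2) by blast
  next
    case 3
    then have "{i, j} \<in> (\<lambda>(i, j). {i, j}) ` D" by force
    then show ?thesis unfolding polygon_edges_def by blast
  next
    case 4
    then have "{i, j} \<in> (\<lambda>(i, j). {i, j}) ` D" by force
    then show ?thesis unfolding polygon_edges_def by blast
  qed
qed

lemma polygon_edgesE:
  assumes "e \<in> polygon_edges"
  obtains i j where "i < j" "j < n" "e = {i, j}" "adj i j"
proof -
  from assms consider a where "a < n" "e = {a, Suc a mod n}" | a b where "(a, b) \<in> D" "e = {a, b}"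
    unfolding polygon_edges_def by auto
  then obtain a b where ab: "a < n" "b < n" "e = {a, b}" "adj a b"
  proof cases
    case (1 a)
    then show ?thesis using that[of a "Suc a mod n"] n_ge_3 by (simp add: adj_def)
  next
    case (2 a b)
    then show ?thesis using that[of a b] D_mem[OF 2(1)] adj_D[OF 2(1)] by simp
  qed
  then have "a \<noteq> b" using adj_irrefl by blast
  then consider "a < b" | "b < a" by linarith
  then show ?thesis
  proof cases
    case 1
    then show ?thesis using that ab by blast
  next
    case 2
    then show ?thesis using that[of b a] ab adj_sym by (simp add: insert_commute)
  qed
qed

lemma polygon_edges_sub: "\<forall>e\<in>polygon_edges. e \<subseteq> {..<n}"
proof
  fix e assume "e \<in> polygon_edges"
  then obtain i j where "i < j" "j < n" "e = {i, j}" by (rule polygon_edgesE)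
  then show "e \<subseteq> {..<n}" by auto
qed

lemma finite_D_base: "finite D_base"
  using D_base_sub_chords finite_chords by (rule finite_subset)

lemma D_base_maximal:
  assumes "(k, j) \<in> chords 0 (n - 1)" "(k, j) \<notin> D_base" "noncrossing (insert (k, j) D_base)"
  shows False
proof -
  have "insert (k, j) D_base \<subseteq> chords 0 (n - 1)" using D_base_sub_chords assms(1) by blast
  moreover have "0 < n - 1" using n_ge_3 by simp
  ultimately have "card (insert (k, j) D_base) + 1 \<le> n - 1 - 0"
    by (rule card_noncrossing_chords[OF assms(3)])
  then show False using card_D_base assms(2) finite_D_base n_ge_3 by simp
qed

text \<open>The farthest neighbour k of i below j is adjacent to j: otherwise (k, j) could be added
  to the non-crossing chords of the polygon, exceeding the bound of n - 2.\<close>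
lemma apex_exists:
  assumes ij: "(i, j) \<in> D_base"
  obtains k where "i < k" "k < j" "adj i k" "adj k j"
proof -
  have ij': "i < j" "j < n" "2 \<le> j - i" using D_base_mem[OF ij] by auto
  define K where "K = insert (Suc i) {b. (i, b) \<in> D_base \<and> b < j}"
  define k where "k = Max K"
  have fin: "finite K"
    unfolding K_def by (rule finite_insert[THEN iffD2], rule finite_subset[of _ "{..<j}"]) auto
  have "k \<in> K" unfolding k_def using fin by (rule Max_in) (simp add: K_def)
  then have k_cases: "k = Suc i \<or> (i, k) \<in> D_base \<and> k < j" unfolding K_def by blast
  have k_max: "b \<le> k" if "(i, b) \<in> D_base" "b < j" for b
    unfolding k_def using fin that by (simp add: K_def)
  have k: "i < k" "k < j" "adj i k"
    using k_cases ij' D_base_mem[of i k] adj_Suc[of i] adj_iff[of i k] by auto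
  have ik: "(i, k) \<in> D_base" if "i < a" "a < k" for a
    using k_cases that by auto
  show ?thesis
  proof (rule that[OF k], rule ccontr)
    assume "\<not> adj k j"
    then have kj: "(k, j) \<notin> D_base" "j \<noteq> Suc k" using adj_iff[of k j] k ij' by auto
    have "noncrossing (insert (k, j) D_base)"
    proof (rule noncrossing_insertI[OF noncrossing_D_base])
      fix a b
      assume ab: "(a, b) \<in> D_base"
      show "\<not> (a < k \<and> k < b \<and> b < j)"
      proof
        assume a: "a < k \<and> k < b \<and> b < j"
        consider "a < i" | "a = i" | "i < a" by linarith
        then show False
        proof cases
          case 1
          then show False using noncrossingD[OF noncrossing_D_base ab ij] a k by linarith
        next
          case 2
          then show False using k_max[of b] ab a by auto
        next
          case 3
          then show False using noncrossingD[OF noncrossing_D_base ik[of a] ab] a by linarith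
        qed
      qed
    next
      fix c d
      assume "(c, d) \<in> D_base"
      then show "\<not> (k < c \<and> c < j \<and> j < d)"
        using noncrossingD[OF noncrossing_D_base ij] k by (meson order.strict_trans)
    qed
    moreover have "(k, j) \<in> chords 0 (n - 1)" using k kj ij' by (auto simp: chords_def)
    ultimately show False using D_base_maximal kj(1) by blast
  qed
qed

text \<open>Only the apex w of the triangle beyond (a, c) is part of the definition; the apexes beyond
  (a, b) and (b, c) exist by \<open>apex_exists\<close>, so every excluded configuration spans a sun.\<close>
definition sun_free :: bool where
  "sun_free \<longleftrightarrow> \<not> (\<exists>a b c w. a < b \<and> b < c \<and> (a, b) \<in> D \<and> (b, c) \<in> D \<and> (a, c) \<in> D \<and>
     w < n \<and> (w < a \<or> c < w) \<and> adj w a \<and> adj w c)"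

text \<open>The sub-polygon l, l + 1, ..., r is cut off by a side, or by a diagonal whose triangle on
  the far side is known; its apex w is what allows sun-freeness to be applied inside.\<close>
definition pocket :: "nat \<Rightarrow> nat \<Rightarrow> bool" where
  "pocket l r \<longleftrightarrow> r = Suc l \<or> (l, r) \<in> D \<and> (\<exists>w<n. (w < l \<or> r < w) \<and> adj w l \<and> adj w r)"

lemma pocket_ear:
  assumes "sun_free" "pocket l r" "r \<noteq> Suc l"
  obtains k where "(l, r) \<in> D" "l < k" "k < r"
    "k = Suc l \<and> pocket k r \<or> r = Suc k \<and> pocket l k"
proof -
  obtain w where lr: "(l, r) \<in> D" and w: "w < n" "w < l \<or> r < w" "adj w l" "adj w r"
    using assms(2,3) unfolding pocket_def by blast
  have lr': "l < r" "r < n" "\<not> (l = 0 \<and> r = n - 1)" using D_mem[OF lr] by auto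
  obtain k where k: "l < k" "k < r" "adj l k" "adj k r"
    using apex_exists[of l r] lr unfolding D_base_def by blast
  have "k < n - 1" using k lr' by linarith
  then have lk: "k = Suc l \<or> (l, k) \<in> D" using adj_iff_D[of l k] k by auto
  have kr: "r = Suc k \<or> (k, r) \<in> D" using adj_iff_D[of k r] k lr' by auto
  have "\<not> ((l, k) \<in> D \<and> (k, r) \<in> D)"
    using assms(1) lr w k unfolding sun_free_def by blast
  with lk kr consider "k = Suc l" "r = Suc k \<or> (k, r) \<in> D" | "r = Suc k" "(l, k) \<in> D"
    by blast
  then show ?thesis
  proof cases
    case 1
    have "adj l r" using adj_D[OF lr] .
    then have "\<exists>w<n. (w < k \<or> r < w) \<and> adj w k \<and> adj w r" using k lr' by (intro exI[of _ l]) auto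
    then have "pocket k r" using 1(2) unfolding pocket_def by blast
    then show ?thesis using that lr k 1(1) by blast
  next
    case 2
    have "adj r l" "adj r k" using adj_D[OF lr] k(4) adj_sym by auto
    then have "\<exists>w<n. (w < l \<or> k < w) \<and> adj w l \<and> adj w k" using k lr' by (intro exI[of _ r]) auto
    then have "pocket l k" using 2(2) unfolding pocket_def by blast
    then show ?thesis using that lr k 2(1) by blast
  qed
qed

lemma pocket_diagonal_from_left:
  assumes "(l, r) \<in> D" "pocket (Suc l) r" "(l, j) \<in> D" "j \<le> r"
  shows "j = r"
proof (rule ccontr)
  assume "j \<noteq> r"
  then have "Suc l < j" "j < r" using D_mem[OF assms(3)] assms(4) by auto
  then have "(Suc l, r) \<in> D" using assms(2) unfolding pocket_def by auto
  then show False using D_cross[OF assms(3)] \<open>Suc l < j\<close> \<open>j < r\<close> by auto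
qed

lemma pocket_diagonal_to_right:
  assumes "(l, Suc k) \<in> D" "pocket l k" "(i, Suc k) \<in> D" "l \<le> i"
  shows "i = l"
proof (rule ccontr)
  assume "i \<noteq> l"
  then have "l < i" "i < k" using D_mem[OF assms(3)] assms(4) by auto
  then have "(l, k) \<in> D" using assms(2) unfolding pocket_def by auto
  then show False using D_cross[OF _ assms(3)] \<open>l < i\<close> \<open>i < k\<close> by auto
qed

text \<open>The ear at l or at r is cut off, leaving the pocket [a, b] with one end dropped; the
  ear is the triangle {l, a, b, r}.\<close>
lemma pocket_peel:
  assumes "sun_free" "pocket l r" "r < n" "r \<noteq> Suc l"
  obtains a b where "l \<le> a" "a < b" "b \<le> r" "r - l = Suc (b - a)" "pocket a b"
    "\<And>i j. l \<le> i \<Longrightarrow> i < j \<Longrightarrow> j \<le> r \<Longrightarrow> adj i j \<Longrightarrow> a \<le> i \<and> j \<le> b \<or> {i, j} \<subseteq> {l, a, b, r}"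
    "\<And>i j. (i, j) \<in> D \<Longrightarrow> l \<le> i \<Longrightarrow> j \<le> r \<Longrightarrow> a \<le> i \<and> j \<le> b \<or> (i, j) = (l, r)"
proof -
  obtain k where lr: "(l, r) \<in> D" and k: "l < k" "k < r"
    and ear: "k = Suc l \<and> pocket k r \<or> r = Suc k \<and> pocket l k"
    using pocket_ear[OF assms(1,2,4)] by blast
  have lr': "\<not> (l = 0 \<and> r = n - 1)" using D_mem[OF lr] by blast
  have adj_cases: "j = Suc i \<or> (i, j) \<in> D" if "l \<le> i" "i < j" "j \<le> r" "adj i j" for i j
  proof -
    have "\<not> (i = 0 \<and> j = n - 1)"
    proof
      assume "i = 0 \<and> j = n - 1"
      then have "l = 0" "r = n - 1" using that assms(3) by auto
      then show False using lr' by simp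
    qed
    then show ?thesis using adj_iff_D[of i j] that assms(3) by simp
  qed
  from ear show ?thesis
  proof
    assume left: "k = Suc l \<and> pocket k r"
    have diag: "j = r" if "(l, j) \<in> D" "j \<le> r" for j
      using pocket_diagonal_from_left[OF lr _ that] left by blast
    show ?thesis
    proof (rule that[of k r])
      show "l \<le> k" "k < r" "r \<le> r" "r - l = Suc (r - k)" "pocket k r" using left k by auto
      show "k \<le> i \<and> j \<le> r \<or> {i, j} \<subseteq> {l, k, r, r}" if "l \<le> i" "i < j" "j \<le> r" "adj i j" for i j
        using adj_cases[OF that] diag[of j] that left by (cases "i = l") auto
      show "k \<le> i \<and> j \<le> r \<or> (i, j) = (l, r)" if "(i, j) \<in> D" "l \<le> i" "j \<le> r" for i j
        using diag[of j] that left by (cases "i = l") auto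
    qed
  next
    assume right: "r = Suc k \<and> pocket l k"
    have diag: "i = l" if "(i, r) \<in> D" "l \<le> i" for i
      using pocket_diagonal_to_right[of l k i] lr right that by blast
    show ?thesis
    proof (rule that[of l k])
      show "l \<le> l" "l < k" "k \<le> r" "r - l = Suc (k - l)" "pocket l k" using right k by auto
      show "l \<le> i \<and> j \<le> k \<or> {i, j} \<subseteq> {l, l, k, r}" if "l \<le> i" "i < j" "j \<le> r" "adj i j" for i j
        using adj_cases[OF that] diag[of i] that right by (cases "j = r") auto
      show "l \<le> i \<and> j \<le> k \<or> (i, j) = (l, r)" if "(i, j) \<in> D" "l \<le> i" "j \<le> r" for i j
        using diag[of i] that right by (cases "j = r") auto
    qed
  qed
qed

lemma pocket_split:
  assumes "sun_free" "pocket l r" "r < n"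
  shows "\<exists>m. l < m \<and> m \<le> r \<and> (\<forall>i j. (i, j) \<in> D \<and> l \<le> i \<and> j \<le> r \<longrightarrow> i < m \<and> m \<le> j)"
  using assms(2,3)
proof (induction "r - l" arbitrary: l r rule: less_induct)
  case less
  show ?case
  proof (cases "r = Suc l")
    case True
    have "(i, j) \<notin> D" if "l \<le> i" "j \<le> r" for i j
      using D_mem[of i j] that True by auto
    then show ?thesis using True by (intro exI[of _ r]) auto
  next
    case False
    show ?thesis
    proof (rule pocket_peel[OF assms(1) less.prems False])
      fix a b
      assume ab: "l \<le> a" "a < b" "b \<le> r" "r - l = Suc (b - a)" "pocket a b"
        and "\<And>i j. l \<le> i \<Longrightarrow> i < j \<Longrightarrow> j \<le> r \<Longrightarrow> adj i j \<Longrightarrow>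
          a \<le> i \<and> j \<le> b \<or> {i, j} \<subseteq> {l, a, b, r}"
        and diag: "\<And>i j. (i, j) \<in> D \<Longrightarrow> l \<le> i \<Longrightarrow> j \<le> r \<Longrightarrow> a \<le> i \<and> j \<le> b \<or> (i, j) = (l, r)"
      have "\<exists>m. a < m \<and> m \<le> b \<and> (\<forall>i j. (i, j) \<in> D \<and> a \<le> i \<and> j \<le> b \<longrightarrow> i < m \<and> m \<le> j)"
        by (rule less.hyps) (use ab less.prems(2) in auto)
      then obtain m where m: "a < m" "m \<le> b"
        and straddle: "\<And>i j. (i, j) \<in> D \<Longrightarrow> a \<le> i \<Longrightarrow> j \<le> b \<Longrightarrow> i < m \<and> m \<le> j"
        by blast
      have "i < m \<and> m \<le> j" if "(i, j) \<in> D" "l \<le> i" "j \<le> r" for i j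
        using diag[OF that] straddle[OF that(1)] m ab by auto
      then show ?thesis using m ab by (intro exI[of _ m]) auto
    qed
  qed
qed

definition pocket_decomposition :: "nat \<Rightarrow> nat \<Rightarrow> nat set list \<Rightarrow> bool" where
  "pocket_decomposition l r Bs \<longleftrightarrow> Bs \<noteq> [] \<and> (\<forall>B\<in>set Bs. B \<subseteq> {l..r} \<and> card B \<le> 3) \<and>
     {l, r} \<subseteq> hd Bs \<and> (\<forall>i j. l \<le> i \<and> i < j \<and> j \<le> r \<and> adj i j \<longrightarrow> (\<exists>B\<in>set Bs. {i, j} \<subseteq> B)) \<and>
     running_intersection Bs"

lemma pocket_decomposition_Cons:
  assumes "pocket_decomposition a b Bs" and ab: "l \<le> a" "a < b" "b \<le> r" "r - l = Suc (b - a)"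
    and edges: "\<And>i j. l \<le> i \<Longrightarrow> i < j \<Longrightarrow> j \<le> r \<Longrightarrow> adj i j \<Longrightarrow>
      a \<le> i \<and> j \<le> b \<or> {i, j} \<subseteq> {l, a, b, r}"
  shows "pocket_decomposition l r ({l, a, b, r} # Bs)"
proof -
  have Bs: "Bs \<noteq> []" "\<forall>B\<in>set Bs. B \<subseteq> {a..b} \<and> card B \<le> 3" "{a, b} \<subseteq> hd Bs"
    "\<And>i j. a \<le> i \<Longrightarrow> i < j \<Longrightarrow> j \<le> b \<Longrightarrow> adj i j \<Longrightarrow> \<exists>B\<in>set Bs. {i, j} \<subseteq> B"
    "running_intersection Bs"
    using assms(1) unfolding pocket_decomposition_def by blast+
  let ?T = "{l, a, b, r}"
  have one_end: "a = l \<or> b = r" and ends: "?T \<inter> {a..b} \<subseteq> {a, b}" using ab by auto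
  have card_T: "card ?T \<le> 3"
    using one_end card_length[of "[l, b, r]"] card_length[of "[l, a, r]"] by auto
  have sub: "{a..b} \<subseteq> {l..r}" "?T \<subseteq> {l..r}" using ab by auto
  have bags: "\<forall>B\<in>set (?T # Bs). B \<subseteq> {l..r} \<and> card B \<le> 3"
  proof
    fix B assume "B \<in> set (?T # Bs)"
    then consider "B = ?T" | "B \<in> set Bs" by auto
    then show "B \<subseteq> {l..r} \<and> card B \<le> 3"
    proof cases
      case 1
      then show ?thesis using card_T sub(2) by simp
    next
      case 2
      then show ?thesis using Bs(2) sub(1) by blast
    qed
  qed
  have cover: "\<exists>B\<in>set (?T # Bs). {i, j} \<subseteq> B" if "l \<le> i" "i < j" "j \<le> r" "adj i j" for i j
    using edges[OF that] Bs(4)[of i j] that by auto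
  have "running_intersection (?T # Bs)"
  proof (rule running_intersection_Cons[OF Bs(5,1)])
    show "v \<in> hd Bs" if "B \<in> set Bs" "v \<in> ?T" "v \<in> B" for v B
      using that ends Bs(2,3) by blast
  qed
  then show ?thesis unfolding pocket_decomposition_def using bags cover by simp
qed

lemma pocket_decomposition_exists:
  assumes "sun_free" "pocket l r" "r < n"
  shows "\<exists>Bs. pocket_decomposition l r Bs"
  using assms(2,3)
proof (induction "r - l" arbitrary: l r rule: less_induct)
  case less
  show ?case
  proof (cases "r = Suc l")
    case True
    have "card {l, r} \<le> 3" by (simp add: card_insert_if)
    moreover have "{i, j} \<subseteq> {l, r}" if "l \<le> i" "i < j" "j \<le> r" for i j
      using that True by auto
    ultimately have "pocket_decomposition l r [{l, r}]"
      unfolding pocket_decomposition_def using True by (simp add: running_intersection_singleton)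
    then show ?thesis ..
  next
    case False
    show ?thesis
    proof (rule pocket_peel[OF assms(1) less.prems False])
      fix a b
      assume ab: "l \<le> a" "a < b" "b \<le> r" "r - l = Suc (b - a)" "pocket a b"
        and edges: "\<And>i j. l \<le> i \<Longrightarrow> i < j \<Longrightarrow> j \<le> r \<Longrightarrow> adj i j \<Longrightarrow>
          a \<le> i \<and> j \<le> b \<or> {i, j} \<subseteq> {l, a, b, r}"
        and "\<And>i j. (i, j) \<in> D \<Longrightarrow> l \<le> i \<Longrightarrow> j \<le> r \<Longrightarrow> a \<le> i \<and> j \<le> b \<or> (i, j) = (l, r)"
      have "\<exists>Bs. pocket_decomposition a b Bs"
        by (rule less.hyps) (use ab less.prems(2) in auto)
      then show ?thesis using pocket_decomposition_Cons[OF _ ab(1-4) edges] by blast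
    qed
  qed
qed

lemma top_triangle:
  obtains k where "0 < k" "k < n - 1" "pocket 0 k" "pocket k (n - 1)"
    "\<And>i j. (i, j) \<in> D \<Longrightarrow> j \<le> k \<or> k \<le> i"
proof -
  have "(0, n - 1) \<in> D_base" unfolding D_base_def by simp
  then obtain k where k: "0 < k" "k < n - 1" "adj 0 k" "adj k (n - 1)"
    using apex_exists by blast
  have last: "adj (n - 1) 0" "adj (n - 1) k" using adj_0_last k(4) adj_sym by auto
  have lk: "k = Suc 0 \<or> (0, k) \<in> D" using adj_iff_D[of 0 k] k by auto
  have kr: "n - 1 = Suc k \<or> (k, n - 1) \<in> D" using adj_iff_D[of k "n - 1"] k n_ge_3 by auto
  have "\<exists>w<n. (w < 0 \<or> k < w) \<and> adj w 0 \<and> adj w k"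
    using last k n_ge_3 by (intro exI[of _ "n - 1"]) auto
  then have "pocket 0 k" using lk unfolding pocket_def by blast
  moreover have "\<exists>w<n. (w < k \<or> n - 1 < w) \<and> adj w k \<and> adj w (n - 1)"
    using k n_ge_3 adj_0_last by (intro exI[of _ 0]) auto
  then have "pocket k (n - 1)" using kr unfolding pocket_def by blast
  moreover have "j \<le> k \<or> k \<le> i" if ij: "(i, j) \<in> D" for i j
  proof (rule ccontr)
    assume "\<not> (j \<le> k \<or> k \<le> i)"
    then have between: "i < k" "k < j" by auto
    show False
    proof (cases "i = 0")
      case True
      then have "j < n - 1" using D_mem[OF ij] by auto
      then have "(k, n - 1) \<in> D" using kr between by auto
      then show False using D_cross[OF ij] True between \<open>j < n - 1\<close> by auto
    next
      case False
      then have "(0, k) \<in> D" using lk between by auto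
      then show False using D_cross[OF _ ij] False between by auto
    qed
  qed
  ultimately show ?thesis using that k(1,2) by blast
qed

definition arc :: "nat \<Rightarrow> nat \<Rightarrow> nat set" where
  "arc s L = (\<lambda>t. (s + t) mod n) ` {..<L}"

lemma arc_induced_path:
  assumes "0 < L" "L < n" "\<And>i j. (i, j) \<in> D \<Longrightarrow> i \<in> arc s L \<Longrightarrow> j \<in> arc s L \<Longrightarrow> False"
  shows "induced_path polygon_edges (arc s L)"
proof -
  define g where "g t = (s + t) mod n" for t
  have g_lt: "g t < n" for t using n_ge_3 by (simp add: g_def)
  have g_inj: "a = b" if "g a = g b" "a < n" "b < n" for a b
    using mod_add_left_inj that unfolding g_def by blast
  have g_Suc: "g (Suc t) = Suc (g t) mod n" for t unfolding g_def by (simp add: mod_Suc_eq)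
  have in_arc: "g t \<in> arc s L" if "t < L" for t using that unfolding arc_def g_def by blast
  have adj_g: "adj (g a) (g b) \<longleftrightarrow> a = Suc b \<or> b = Suc a" if "a < L" "b < L" for a b
  proof
    assume "adj (g a) (g b)"
    then consider "g b = g (Suc a)" | "g a = g (Suc b)" | "(g a, g b) \<in> D" | "(g b, g a) \<in> D"
      unfolding adj_def g_Suc by blast
    then show "a = Suc b \<or> b = Suc a"
    proof cases
      case 1
      then show ?thesis using g_inj[of b "Suc a"] that assms(2) by simp
    next
      case 2
      then show ?thesis using g_inj[of a "Suc b"] that assms(2) by simp
    qed (use assms(3) in_arc that in blast)+
  next
    assume "a = Suc b \<or> b = Suc a"
    then show "adj (g a) (g b)" using g_Suc[of a] g_Suc[of b] unfolding adj_def by auto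
  qed
  define xs where "xs = map g [0..<L]"
  show ?thesis
    unfolding induced_path_def
  proof (intro exI conjI)
    show "xs \<noteq> []" using assms(1) by (simp add: xs_def)
    have "inj_on g (set [0..<L])" using g_inj assms(2) by (auto intro: inj_onI)
    then show "distinct xs" by (simp add: xs_def distinct_map)
    show "set xs = arc s L" by (simp add: xs_def arc_def g_def lessThan_atLeast0)
    show "\<forall>i<length xs. \<forall>j<length xs. {xs!i, xs!j} \<in> polygon_edges \<longleftrightarrow> (i = Suc j \<or> j = Suc i)"
      using edge_iff_adj[OF g_lt g_lt] adj_g by (simp add: xs_def)
  qed
qed

lemma arc_interval:
  assumes "p \<le> q" "q \<le> n"
  shows "arc p (q - p) = {p..<q}"
proof
  show "arc p (q - p) \<subseteq> {p..<q}" using assms unfolding arc_def by auto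
  show "{p..<q} \<subseteq> arc p (q - p)"
  proof
    fix x assume "x \<in> {p..<q}"
    then have "x = (p + (x - p)) mod n" "x - p \<in> {..<q - p}" using assms by auto
    then show "x \<in> arc p (q - p)" unfolding arc_def by (rule image_eqI)
  qed
qed

lemma arc_complement:
  assumes "p < q" "q < n"
  shows "arc q (n - (q - p)) = {..<n} - {p..<q}"
proof
  show "arc q (n - (q - p)) \<subseteq> {..<n} - {p..<q}"
  proof
    fix x assume "x \<in> arc q (n - (q - p))"
    then obtain t where t: "t < n - (q - p)" "x = (q + t) mod n" unfolding arc_def by blast
    show "x \<in> {..<n} - {p..<q}"
    proof (cases "q + t < n")
      case True
      then show ?thesis using t by simp
    next
      case False
      then have "x = q + t - n" using t assms by (simp add: le_mod_geq)
      then show ?thesis using t assms False by auto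
    qed
  qed
  show "{..<n} - {p..<q} \<subseteq> arc q (n - (q - p))"
  proof
    fix x assume x: "x \<in> {..<n} - {p..<q}"
    show "x \<in> arc q (n - (q - p))"
    proof (cases "q \<le> x")
      case True
      then have "x = (q + (x - q)) mod n" "x - q \<in> {..<n - (q - p)}" using x assms by auto
      then show ?thesis unfolding arc_def by (rule image_eqI)
    next
      case False
      then have "x < p" using x by auto
      have "q + (x + n - q) = x + n" using assms by auto
      then have "x = (q + (x + n - q)) mod n" using x by simp
      moreover have "x + n - q \<in> {..<n - (q - p)}" using \<open>x < p\<close> assms by auto
      ultimately show ?thesis unfolding arc_def by (rule image_eqI)
    qed
  qed
qed

text \<open>Every diagonal lies on one side of the top triangle and straddles the split point of
  its pocket, so exactly one of its ends lies in the arc between the two split points.\<close>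
lemma two_induced_paths_if_sun_free:
  assumes "sun_free"
  shows "two_induced_paths {..<n} polygon_edges"
proof -
  obtain k where k: "0 < k" "k < n - 1" "pocket 0 k" "pocket k (n - 1)"
    and sides: "\<And>i j. (i, j) \<in> D \<Longrightarrow> j \<le> k \<or> k \<le> i"
    by (fact top_triangle)
  have "k < n" using k(2) by linarith
  obtain p where p: "0 < p" "p \<le> k" "\<And>i j. (i, j) \<in> D \<Longrightarrow> j \<le> k \<Longrightarrow> i < p \<and> p \<le> j"
    using pocket_split[OF assms k(3) \<open>k < n\<close>] by auto
  obtain q where q: "k < q" "q \<le> n - 1" "\<And>i j. (i, j) \<in> D \<Longrightarrow> k \<le> i \<Longrightarrow> i < q \<and> q \<le> j"
    using pocket_split[OF assms k(4)] D_mem n_ge_3 by fastforce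
  have one_end: "i \<in> {p..<q} \<longleftrightarrow> j \<notin> {p..<q}" if "(i, j) \<in> D" for i j
    using sides[OF that] p(3)[OF that] q(3)[OF that] p(2) q(1) by auto
  have "p < q" "q < n" using p q k by auto
  have "induced_path polygon_edges (arc p (q - p))"
    by (rule arc_induced_path) (use \<open>p < q\<close> \<open>q < n\<close> one_end arc_interval in auto)
  moreover have "induced_path polygon_edges (arc q (n - (q - p)))"
    by (rule arc_induced_path) (use \<open>p < q\<close> \<open>q < n\<close> one_end D_mem arc_complement in auto)
  ultimately have "induced_path polygon_edges {p..<q}"
    "induced_path polygon_edges ({..<n} - {p..<q})"
    using arc_interval[of p q] arc_complement[OF \<open>p < q\<close> \<open>q < n\<close>] \<open>p < q\<close> \<open>q < n\<close> by simp_all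
  moreover have "{p..<q} \<union> ({..<n} - {p..<q}) = {..<n}" using \<open>q < n\<close> by auto
  ultimately show ?thesis unfolding two_induced_paths_def by blast
qed

lemma glued_pocket_decompositions:
  assumes "pocket_decomposition 0 k Bs1" "pocket_decomposition k (n - 1) Bs2" "0 < k" "k < n - 1"
  defines "Bs \<equiv> rev Bs1 @ {0, k, n - 1} # Bs2"
  shows "\<forall>B\<in>set Bs. B \<subseteq> {..<n} \<and> card B \<le> 3" and "running_intersection Bs"
proof -
  have Bs1: "Bs1 \<noteq> []" "\<forall>B\<in>set Bs1. B \<subseteq> {0..k} \<and> card B \<le> 3" "{0, k} \<subseteq> hd Bs1"
    "running_intersection Bs1"
    using assms(1) unfolding pocket_decomposition_def by simp_all
  have Bs2: "Bs2 \<noteq> []" "\<forall>B\<in>set Bs2. B \<subseteq> {k..n - 1} \<and> card B \<le> 3" "{k, n - 1} \<subseteq> hd Bs2"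
    "running_intersection Bs2"
    using assms(2) unfolding pocket_decomposition_def by simp_all
  have k: "0 < k" "k < n - 1" "k < n" using assms(3,4) by auto
  let ?T = "{0, k, n - 1}"
  have card_T: "card ?T \<le> 3" using card_length[of "[0, k, n - 1]"] by simp
  have "B \<subseteq> {..<n} \<and> card B \<le> 3" if B: "B \<in> set Bs" for B
  proof -
    consider "B \<in> set Bs1" | "B = ?T" | "B \<in> set Bs2" using B unfolding Bs_def by auto
    then show ?thesis
    proof cases
      case 1
      then have "B \<subseteq> {0..k}" "card B \<le> 3" using Bs1(2) by auto
      then show ?thesis using k(3) by auto
    next
      case 2
      then show ?thesis using card_T n_ge_3 k(3) by auto
    next
      case 3
      then have "B \<subseteq> {k..n - 1}" "card B \<le> 3" using Bs2(2) by auto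
      moreover have "{k..n - 1} \<subseteq> {..<n}" using n_ge_3 by auto
      ultimately show ?thesis by blast
    qed
  qed
  then show "\<forall>B\<in>set Bs. B \<subseteq> {..<n} \<and> card B \<le> 3" by blast
  have "running_intersection (?T # Bs2)"
  proof (rule running_intersection_Cons[OF Bs2(4,1)])
    fix v B assume "B \<in> set Bs2" "v \<in> ?T" "v \<in> B"
    moreover have "B \<subseteq> {k..n - 1}" using Bs2(2) \<open>B \<in> set Bs2\<close> by blast
    ultimately have "v \<in> {k..n - 1}" "v \<in> ?T" by auto
    then have "v \<in> {k, n - 1}" using k(1) by auto
    then show "v \<in> hd Bs2" using Bs2(3) by blast
  qed
  then show "running_intersection Bs"
    unfolding Bs_def
  proof (rule running_intersection_append[OF running_intersection_rev[OF Bs1(4)]])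
    show "rev Bs1 \<noteq> []" "?T # Bs2 \<noteq> []" using Bs1(1) by auto
    fix v B C
    assume B: "B \<in> set (rev Bs1)" "v \<in> B" and C: "C \<in> set (?T # Bs2)" "v \<in> C"
    have "B \<subseteq> {0..k}" using Bs1(2) B(1) by auto
    then have "v \<in> {0..k}" using B(2) by blast
    moreover have "C = ?T \<or> C \<subseteq> {k..n - 1}" using Bs2(2) C(1) by auto
    then have "v \<in> ?T \<or> v \<in> {k..n - 1}" using C(2) by blast
    ultimately have "v \<in> {0, k}" using k(2) by auto
    then show "v \<in> last (rev Bs1) \<and> v \<in> hd (?T # Bs2)" using Bs1(1,3) by (auto simp: last_rev)
  qed
qed

lemma width_3_if_sun_free:
  assumes "sun_free"
  obtains Bs where "path_decomposition {..<n} polygon_edges Bs" "\<forall>B\<in>set Bs. card B \<le> 3"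
proof -
  obtain k where k: "0 < k" "k < n - 1" "pocket 0 k" "pocket k (n - 1)"
    and sides: "\<And>i j. (i, j) \<in> D \<Longrightarrow> j \<le> k \<or> k \<le> i"
    by (fact top_triangle)
  have "k < n" using k(2) by linarith
  obtain Bs1 where dec1: "pocket_decomposition 0 k Bs1"
    using pocket_decomposition_exists[OF assms k(3) \<open>k < n\<close>] by blast
  then have Bs1: "\<And>i j. i < j \<Longrightarrow> j \<le> k \<Longrightarrow> adj i j \<Longrightarrow> \<exists>B\<in>set Bs1. {i, j} \<subseteq> B"
    unfolding pocket_decomposition_def by simp
  obtain Bs2 where dec2: "pocket_decomposition k (n - 1) Bs2"
    using pocket_decomposition_exists[OF assms k(4)] n_ge_3 by auto
  then have Bs2: "\<And>i j. k \<le> i \<Longrightarrow> i < j \<Longrightarrow> j \<le> n - 1 \<Longrightarrow> adj i j \<Longrightarrow>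
      \<exists>B\<in>set Bs2. {i, j} \<subseteq> B"
    unfolding pocket_decomposition_def by blast
  define Bs where "Bs = rev Bs1 @ {0, k, n - 1} # Bs2"
  note glued = glued_pocket_decompositions[OF dec1 dec2 k(1,2), folded Bs_def]
  have cover: "\<exists>B\<in>set Bs. e \<subseteq> B" if e: "e \<in> polygon_edges" for e
  proof -
    obtain i j where ij: "i < j" "j < n" "e = {i, j}" "adj i j" using e by (rule polygon_edgesE)
    consider "j \<le> k" | "k \<le> i" | "i < k" "k < j" by linarith
    then show ?thesis
    proof cases
      case 1
      then obtain B where "B \<in> set Bs1" "{i, j} \<subseteq> B" using Bs1 ij by blast
      then show ?thesis using ij(3) unfolding Bs_def by auto
    next
      case 2
      have "j \<le> n - 1" using ij(2) by linarith
      then obtain B where "B \<in> set Bs2" "{i, j} \<subseteq> B" using Bs2 ij 2 by blast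
      then show ?thesis using ij(3) unfolding Bs_def by auto
    next
      case 3
      then have "(i, j) \<in> D_base" using adj_iff[of i j] ij by auto
      moreover have "(i, j) \<notin> D" using sides[of i j] 3 by auto
      ultimately have "i = 0" "j = n - 1" unfolding D_base_def by auto
      then show ?thesis using ij(3) unfolding Bs_def by auto
    qed
  qed
  have "path_decomposition {..<n} polygon_edges Bs"
    unfolding path_decomposition_iff using glued cover by blast
  then show ?thesis using that glued(1) by blast
qed

lemma sun_free_if_width_3:
  assumes "path_decomposition {..<n} polygon_edges Bs" "\<forall>B\<in>set Bs. card B \<le> 3"
  shows "sun_free"
  unfolding sun_free_def
proof
  assume "\<exists>a b c w. a < b \<and> b < c \<and> (a, b) \<in> D \<and> (b, c) \<in> D \<and> (a, c) \<in> D \<and>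
    w < n \<and> (w < a \<or> c < w) \<and> adj w a \<and> adj w c"
  then obtain a b c w where abc: "a < b" "b < c" "(a, b) \<in> D" "(b, c) \<in> D" "(a, c) \<in> D"
    and w: "w < n" "w < a \<or> c < w" "adj w a" "adj w c"
    by blast
  have "(a, b) \<in> D_base" "(b, c) \<in> D_base" using abc unfolding D_base_def by auto
  then obtain u v where u: "a < u" "u < b" "adj a u" "adj u b"
    and v: "b < v" "v < c" "adj b v" "adj v c"
    using apex_exists by metis
  have "c < n" using D_mem[OF abc(4)] by simp
  then have lt: "a < n" "b < n" "c < n" "u < n" "v < n" using abc u v by auto
  have "adj a b" "adj b c" "adj a c" "adj a w" "adj c w" using abc w adj_D adj_sym by auto
  then show False
    using sun_excludes_width_3_decomposition[OF assms finite_lessThan, of a b c u v w]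
      edge_iff_adj lt w(1) u v abc w(2) adj_sym by auto
qed

lemma adj_stays_inside:
  assumes xy: "(x, y) \<in> D" and uv: "u < n" "v < n" "adj u v" and "v \<noteq> x" "v \<noteq> y"
    and inside: "x < u" "u < y"
  shows "x < v \<and> v < y"
proof -
  have "y < n" using D_mem[OF xy] by simp
  from uv(3) consider "v = Suc u mod n" | "u = Suc v mod n" | "(u, v) \<in> D" | "(v, u) \<in> D"
    unfolding adj_def by blast
  then show ?thesis
  proof cases
    case 1
    then have "v = Suc u" using inside \<open>y < n\<close> by simp
    then show ?thesis using inside assms(5,6) by auto
  next
    case 2
    have "Suc v < n"
    proof (rule ccontr)
      assume "\<not> Suc v < n"
      then have "Suc v = n" using uv(2) by simp
      then show False using 2 inside by simp
    qed
    then have "u = Suc v" using 2 by simp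
    then show ?thesis using inside assms(5,6) by auto
  next
    case 3
    then have "u < v" using D_mem by blast
    then show ?thesis using D_cross[OF xy 3] inside assms(6) by fastforce
  next
    case 4
    then have "v < u" using D_mem by blast
    then show ?thesis using D_cross[OF 4 xy] inside assms(5) by fastforce
  qed
qed

lemma adj_same_side:
  assumes "(x, y) \<in> D" "u < n" "v < n" "adj u v" "u \<notin> {x, y}" "v \<notin> {x, y}"
  shows "x < u \<and> u < y \<longleftrightarrow> x < v \<and> v < y"
  using adj_stays_inside[OF assms(1-4)] adj_stays_inside[OF assms(1,3,2)] assms(4-6) adj_sym
  by blast

lemma induced_path_not_inner_side:
  assumes "induced_path polygon_edges S" "(x, y) \<in> D" "{x..y} \<subseteq> S"
  shows False
proof (rule induced_path_no_cycle[OF assms(1), of "y - x" "\<lambda>t. x + t"])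
  have xy: "x < y" "y < n" "2 \<le> y - x" using D_mem[OF assms(2)] by auto
  then show "2 \<le> y - x" "inj_on ((+) x) {..y - x}" "\<And>t. t \<le> y - x \<Longrightarrow> x + t \<in> S"
    using assms(3) by (auto simp: inj_on_def)
  show "{x + t, x + Suc t} \<in> polygon_edges" if "t < y - x" for t
    using that xy edge_iff_adj adj_Suc by simp
  show "{x + 0, x + (y - x)} \<in> polygon_edges"
    using xy edge_iff_adj adj_D[OF assms(2)] by simp
qed

lemma induced_path_not_outer_side:
  assumes "induced_path polygon_edges S" "(x, y) \<in> D" "{..x} \<union> {y..<n} \<subseteq> S"
  shows False
proof -
  have xy: "x < y" "y < n" "2 \<le> y - x" "\<not> (x = 0 \<and> y = n - 1)" using D_mem[OF assms(2)] by auto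
  define c where "c t = (if t \<le> x then t else t - Suc x + y)" for t
  define M where "M = x + (n - y)"
  have c_lt: "c t < n" if "t \<le> M" for t using that xy unfolding c_def M_def by auto
  show False
  proof (rule induced_path_no_cycle[OF assms(1), of M c])
    show "2 \<le> M" using xy unfolding M_def by auto
    show "inj_on c {..M}" unfolding c_def using xy by (auto simp: inj_on_def split: if_splits)
    show "c t \<in> S" if "t \<le> M" for t using that assms(3) xy c_lt[OF that] unfolding c_def by auto
    show "{c t, c (Suc t)} \<in> polygon_edges" if "t < M" for t
    proof -
      have "c (Suc t) = Suc (c t) \<or> (c t, c (Suc t)) = (x, y)" unfolding c_def using xy by auto
      then have "adj (c t) (c (Suc t))"
        using adj_Suc adj_D[OF assms(2)] c_lt[of "Suc t"] that by auto
      then show ?thesis using edge_iff_adj c_lt that by simp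
    qed
    have "c 0 = 0" "c M = n - 1" unfolding c_def M_def using xy by auto
    then show "{c 0, c M} \<in> polygon_edges" using edge_iff_adj adj_0_last n_ge_3 by simp
  qed
qed

text \<open>The other path avoids both ends of the diagonal and is connected, so it stays on one
  side; the first path then contains the diagonal together with the whole other side.\<close>
lemma diagonal_not_in_induced_path_partition:
  assumes "induced_path polygon_edges P" "induced_path polygon_edges Q"
    "P \<union> Q = {..<n}" "P \<inter> Q = {}" "(x, y) \<in> D" "x \<in> P" "y \<in> P"
  shows False
proof -
  have Q_ends: "q < n" "q \<notin> {x, y}" if "q \<in> Q" for q using assms(3,4,6,7) that by auto
  have same_side: "x < q \<and> q < y \<longleftrightarrow> x < q' \<and> q' < y" if "q \<in> Q" "q' \<in> Q" for q q'
  proof (rule induced_path_constant[OF assms(2) _ that])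
    fix a b assume "a \<in> Q" "b \<in> Q" "{a, b} \<in> polygon_edges"
    then show "x < a \<and> a < y \<longleftrightarrow> x < b \<and> b < y"
      using adj_same_side[OF assms(5)] Q_ends edge_iff_adj by auto
  qed
  have "y < n" using D_mem[OF assms(5)] by simp
  show False
  proof (cases "\<exists>q\<in>Q. x < q \<and> q < y")
    case True
    then have "{..x} \<union> {y..<n} \<subseteq> P" using same_side assms(3) \<open>y < n\<close> by fastforce
    then show False using induced_path_not_outer_side[OF assms(1,5)] by blast
  next
    case False
    then have "{x..y} \<subseteq> P" using assms(3) \<open>y < n\<close> assms(6,7) by fastforce
    then show False using induced_path_not_inner_side[OF assms(1,5)] by blast
  qed
qed

lemma sun_free_if_two_induced_paths:
  assumes "two_induced_paths {..<n} polygon_edges"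
  shows "sun_free"
  unfolding sun_free_def
proof
  obtain P Q where PQ: "P \<union> Q = {..<n}" "P \<inter> Q = {}"
    "induced_path polygon_edges P" "induced_path polygon_edges Q"
    using assms unfolding two_induced_paths_def by blast
  assume "\<exists>a b c w. a < b \<and> b < c \<and> (a, b) \<in> D \<and> (b, c) \<in> D \<and> (a, c) \<in> D \<and>
    w < n \<and> (w < a \<or> c < w) \<and> adj w a \<and> adj w c"
  then obtain a b c where abc: "(a, b) \<in> D" "(b, c) \<in> D" "(a, c) \<in> D" by blast
  have "a < n" "b < n" "c < n" using D_mem[OF abc(1)] D_mem[OF abc(2)] by auto
  then have "a \<in> P \<union> Q" "b \<in> P \<union> Q" "c \<in> P \<union> Q" using PQ(1) by auto
  moreover have "False" if "(i, j) \<in> D" "i \<in> P" "j \<in> P" for i j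
    using diagonal_not_in_induced_path_partition[OF PQ(3,4,1,2) that] .
  moreover have "False" if "(i, j) \<in> D" "i \<in> Q" "j \<in> Q" for i j
    using diagonal_not_in_induced_path_partition[OF PQ(4,3) _ _ that] PQ(1,2) by blast
  ultimately show False using abc by blast
qed

lemma pathwidth_le_2_iff_sun_free: "pathwidth {..<n} polygon_edges \<le> 2 \<longleftrightarrow> sun_free"
proof
  assume "pathwidth {..<n} polygon_edges \<le> 2"
  then obtain Bs where "path_decomposition {..<n} polygon_edges Bs" "\<forall>B\<in>set Bs. card B \<le> 3"
    using pathwidth_le_iff[OF polygon_edges_sub] by auto
  then show "sun_free" by (rule sun_free_if_width_3)
next
  assume "sun_free"
  then obtain Bs where "path_decomposition {..<n} polygon_edges Bs" "\<forall>B\<in>set Bs. card B \<le> 3"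
    by (rule width_3_if_sun_free)
  then show "pathwidth {..<n} polygon_edges \<le> 2"
    using pathwidth_le_iff[OF polygon_edges_sub] by auto
qed

lemma two_induced_paths_iff_sun_free: "two_induced_paths {..<n} polygon_edges \<longleftrightarrow> sun_free"
  using sun_free_if_two_induced_paths two_induced_paths_if_sun_free by blast

end

section \<open>Outerplanar triangulations\<close>

lemma outerplanar_triangulationE:
  assumes "outerplanar_triangulation V E"
  obtains D f where "triangulated_polygon (card V) D" "bij_betw f {..<card V} V"
    "E = (`) f ` triangulated_polygon.polygon_edges (card V) D"
proof -
  obtain f D where "3 \<le> card V" and f: "bij_betw f {..<card V} V"
    and D: "D \<subseteq> {(i, j). i < j \<and> j < card V \<and> 2 \<le> j - i \<and> \<not> (i = 0 \<and> j = card V - 1)}"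
      "\<forall>(a, b)\<in>D. \<forall>(c, d)\<in>D. \<not> (a < c \<and> c < b \<and> b < d)" "card D = card V - 3"
    and E: "E = {{f i, f (Suc i mod card V)} | i. i < card V} \<union> (\<lambda>(i, j). {f i, f j}) ` D"
    using assms unfolding outerplanar_triangulation_def by blast
  interpret triangulated_polygon "card V" D
    using \<open>3 \<le> card V\<close> D by unfold_locales (simp_all add: noncrossing_def)
  have "(`) f ` {{i, Suc i mod card V} | i. i < card V} =
      (\<lambda>i. f ` {i, Suc i mod card V}) ` {..<card V}"
    by blast
  also have "\<dots> = {{f i, f (Suc i mod card V)} | i. i < card V}" by auto
  moreover have "(`) f ` (\<lambda>(i, j). {i, j}) ` D = (\<lambda>(i, j). {f i, f j}) ` D"
    unfolding image_image by (rule image_cong) auto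
  ultimately have "E = (`) f ` polygon_edges" unfolding E polygon_edges_def image_Un by simp
  then show ?thesis using that triangulated_polygon_axioms f by blast
qed

theorem propositionp:
  fixes V :: "'a set" and E :: "'a set set" and n :: nat
  assumes "simple_graph V E" and "card V = n"
  shows "(outerplanar_triangulation V E \<and> pathwidth V E \<le> 2) \<longleftrightarrow> (V, E) \<in> PW2 n"
proof -
  have "pathwidth V E \<le> 2 \<longleftrightarrow> two_induced_paths V E" if ot: "outerplanar_triangulation V E"
  proof -
    obtain D f where "triangulated_polygon (card V) D" and f: "bij_betw f {..<card V} V"
      and E: "E = (`) f ` triangulated_polygon.polygon_edges (card V) D"
      using ot by (rule outerplanar_triangulationE)
    then interpret triangulated_polygon "card V" D by simp
    have "pathwidth V E = pathwidth {..<card V} polygon_edges"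
      unfolding E by (rule pathwidth_bij_image[OF f polygon_edges_sub])
    moreover have "two_induced_paths V E \<longleftrightarrow> two_induced_paths {..<card V} polygon_edges"
      unfolding E by (rule two_induced_paths_bij_image[OF f polygon_edges_sub])
    ultimately show ?thesis using pathwidth_le_2_iff_sun_free two_induced_paths_iff_sun_free by simp
  qed
  moreover have "(V, E) \<in> PW2 n \<longleftrightarrow> outerplanar_triangulation V E \<and> two_induced_paths V E"
    using assms(2) by (simp add: PW2_def two_induced_paths_def)
  ultimately show ?thesis by blast
qed

end
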